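(* Let $T_1,T_2$ be equidistant trees with leaf set $X$ such that the tree topology of $T_1$ and the tree topology of $T_2$ differ by exactly one nearest neighbor interchange (NNI) move. Then every tree on the tropical line segment $\Gamma_{T_1,T_2}$ has the same tree topology as $T_1$ or as $T_2$, possibly with some branch lengths equal to $0$.
   Context: Max-plus arithmetic: $a\oplus b=\max\{a,b\}$, $a\odot b=a+b$; vectors in $\mathbb R^e$, $e=\binom{|X|}2$, coordinates indexed by pairs of leaves, considered modulo $\mathbb R\mathbf 1$. An equidistant tree is a rooted phylogenetic tree on leaf set $X$ with nonnegative edge lengths and all root-to-leaf distances equal; its ultrametric is its vector of pairwise leaf distances and determines the tree uniquely. $\Gamma_{T_1,T_2}$ is the set of trees whose ultrametrics are $a\odot u\oplus b\odot v$ ($a,b\in\mathbb R$), where $u,v$ are the ultrametrics of $T_1,T_2$. A clade is the set of leaves descending from a vertex. Two rooted tree topologies differ by one NNI move if there are pairwise disjoint nonempty leaf sets $X_1,X_2,X_3\subseteq X$ such that $X_1\cup X_2\cup X_3$ and each $X_i$ are clades in both trees, the two trees agree on the topology of each clade $X_i$ and on the topology outside the clade $X_1\cup X_2\cup X_3$, and inside the clade $X_1\cup X_2\cup X_3$ one tree has the form $((X_1,X_3),X_2)$ while the other has the form $((X_1,X_2),X_3)$ or $(X_1,(X_2,X_3))$ (i.e., the two trees group different pairs among $X_1,X_2,X_3$ into a clade). "Same tree topology with possible $0$ branch lengths" means the topology is that of $T_1$ or $T_2$ with some edges possibly having length zero (i.e., contracted). *)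

theory Defs
  imports Complex_Main
begin

text \<open>A rooted phylogenetic tree topology on the finite leaf set X is encoded by its
set of clades (a hierarchy): X itself (the root), all singletons (the leaves), and
nonempty subsets of X that are pairwise nested or disjoint.\<close>

definition hierarchy :: "'a set \<Rightarrow> 'a set set \<Rightarrow> bool" where
  "hierarchy X H \<longleftrightarrow> finite X \<and> X \<noteq> {} \<and> X \<in> H \<and> (\<forall>x\<in>X. {x} \<in> H) \<and>
     (\<forall>C\<in>H. C \<noteq> {} \<and> C \<subseteq> X) \<and>
     (\<forall>A\<in>H. \<forall>B\<in>H. A \<subseteq> B \<or> B \<subseteq> A \<or> A \<inter> B = {})"

text \<open>Edge lengths: l C is the length of the edge entering the (non-root) clade C.\<close>

definition root_dist :: "'a set \<Rightarrow> 'a set set \<Rightarrow> ('a set \<Rightarrow> real) \<Rightarrow> 'a \<Rightarrow> real" where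
  "root_dist X H l x = (\<Sum>C\<in>{C\<in>H. C \<noteq> X \<and> x \<in> C}. l C)"

definition tree_dist :: "'a set \<Rightarrow> 'a set set \<Rightarrow> ('a set \<Rightarrow> real) \<Rightarrow> 'a \<Rightarrow> 'a \<Rightarrow> real" where
  "tree_dist X H l x y = (\<Sum>C\<in>{C\<in>H. C \<noteq> X \<and> (x \<in> C) \<noteq> (y \<in> C)}. l C)"

definition equidistant_tree :: "'a set \<Rightarrow> 'a set set \<Rightarrow> ('a set \<Rightarrow> real) \<Rightarrow> bool" where
  "equidistant_tree X H l \<longleftrightarrow> hierarchy X H \<and> (\<forall>C\<in>H. C \<noteq> X \<longrightarrow> 0 \<le> l C) \<and>
     (\<forall>x\<in>X. \<forall>y\<in>X. root_dist X H l x = root_dist X H l y)"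

definition same_ultrametric ::
  "'a set \<Rightarrow> 'a set set \<Rightarrow> ('a set \<Rightarrow> real) \<Rightarrow> 'a set set \<Rightarrow> ('a set \<Rightarrow> real) \<Rightarrow> bool" where
  "same_ultrametric X H l H' l' \<longleftrightarrow>
     (\<forall>x\<in>X. \<forall>y\<in>X. x \<noteq> y \<longrightarrow> tree_dist X H l x y = tree_dist X H' l' x y)"

text \<open>Tree (H,l) lies on the tropical line segment Gamma through (H1,l1),(H2,l2):
its ultrametric is (a \<odot> u) \<oplus> (b \<odot> v) for some reals a b (the free shifts a, b
absorb the quotient by R*1).\<close>

definition on_tropical_segment ::
  "'a set \<Rightarrow> 'a set set \<Rightarrow> ('a set \<Rightarrow> real) \<Rightarrow> 'a set set \<Rightarrow> ('a set \<Rightarrow> real)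
     \<Rightarrow> 'a set set \<Rightarrow> ('a set \<Rightarrow> real) \<Rightarrow> bool" where
  "on_tropical_segment X H1 l1 H2 l2 H l \<longleftrightarrow> equidistant_tree X H l \<and>
     (\<exists>a b::real. \<forall>x\<in>X. \<forall>y\<in>X. x \<noteq> y \<longrightarrow>
        tree_dist X H l x y = max (a + tree_dist X H1 l1 x y) (b + tree_dist X H2 l2 x y))"

definition nni :: "'a set \<Rightarrow> 'a set set \<Rightarrow> 'a set set \<Rightarrow> bool" where
  "nni X H1 H2 \<longleftrightarrow> (\<exists>X1 X2 X3.
     X1 \<noteq> {} \<and> X2 \<noteq> {} \<and> X3 \<noteq> {} \<and>
     X1 \<inter> X2 = {} \<and> X1 \<inter> X3 = {} \<and> X2 \<inter> X3 = {} \<and>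
     (let Y = X1 \<union> X2 \<union> X3 in
       Y \<in> H1 \<and> Y \<in> H2 \<and> X1 \<in> H1 \<and> X1 \<in> H2 \<and> X2 \<in> H1 \<and> X2 \<in> H2 \<and>
       X3 \<in> H1 \<and> X3 \<in> H2 \<and>
       (\<forall>i\<in>{X1, X2, X3}. {C\<in>H1. C \<subseteq> i} = {C\<in>H2. C \<subseteq> i}) \<and>
       {C\<in>H1. \<not> C \<subseteq> Y} = {C\<in>H2. \<not> C \<subseteq> Y} \<and>
       {C\<in>H1. C \<subseteq> Y} = {Y, X1 \<union> X3} \<union> {C\<in>H1. C \<subseteq> X1 \<or> C \<subseteq> X2 \<or> C \<subseteq> X3} \<and>
       ({C\<in>H2. C \<subseteq> Y} = {Y, X1 \<union> X2} \<union> {C\<in>H2. C \<subseteq> X1 \<or> C \<subseteq> X2 \<or> C \<subseteq> X3} \<or>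
        {C\<in>H2. C \<subseteq> Y} = {Y, X2 \<union> X3} \<union> {C\<in>H2. C \<subseteq> X1 \<or> C \<subseteq> X2 \<or> C \<subseteq> X3})))"

end

theory Submission
  imports Defs
begin

(* A tree H on the segment has ultrametric d = max (a + u1) (b + u2). In normal form the NNI move
   trades the clade A \<union> C of H1 for A \<union> B in H2 and keeps every other clade, so under u1, u2 and
   hence d all distances between two of A, B, C are constant. If d(A,C) \<le> d(A,B), every clade K of
   H1 is a cluster of d: points of K are no farther apart than two points that K separates at its
   root. This holds for u1 and u2 separately, hence for d, except for pairs split between A and B,
   where the ultrametric inequality through a point of C applies. A dissimilarity with this property
   is realized on H1 by giving each clade half its diameter as height, edges possibly of length 0.
   Otherwise d(A,B) \<le> d(A,C) and the same argument realizes d on H2. *)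

lemma hierarchy_finite: "hierarchy X H \<Longrightarrow> finite H"
  unfolding hierarchy_def by (meson PowI finite_Pow_iff finite_subset subsetI)

lemma hierarchy_top: "hierarchy X H \<Longrightarrow> X \<in> H"
  unfolding hierarchy_def by blast

lemma hierarchy_singleton: "hierarchy X H \<Longrightarrow> x \<in> X \<Longrightarrow> {x} \<in> H"
  unfolding hierarchy_def by blast

lemma hierarchy_subset: "hierarchy X H \<Longrightarrow> C \<in> H \<Longrightarrow> C \<subseteq> X"
  unfolding hierarchy_def by blast

lemma hierarchy_finite_clade: "hierarchy X H \<Longrightarrow> C \<in> H \<Longrightarrow> finite C"
  unfolding hierarchy_def by (meson finite_subset)

lemma hierarchy_nonempty: "hierarchy X H \<Longrightarrow> C \<in> H \<Longrightarrow> C \<noteq> {}"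
  unfolding hierarchy_def by blast

lemma hierarchy_nested:
  "hierarchy X H \<Longrightarrow> A \<in> H \<Longrightarrow> B \<in> H \<Longrightarrow> x \<in> A \<Longrightarrow> x \<in> B \<Longrightarrow> A \<subseteq> B \<or> B \<subseteq> A"
  unfolding hierarchy_def by blast

lemma equidistant_tree_hierarchy: "equidistant_tree X H l \<Longrightarrow> hierarchy X H"
  unfolding equidistant_tree_def by blast

lemma hierarchy_least_containing:
  assumes h: "hierarchy X H" and S: "S \<subseteq> H" "S \<noteq> {}" "\<forall>C\<in>S. z \<in> C"
  shows "\<exists>P\<in>S. \<forall>Q\<in>S. P \<subseteq> Q"
proof -
  have "finite S" using hierarchy_finite[OF h] S(1) finite_subset by blast
  then obtain P where P: "P \<in> S" "\<forall>Q\<in>S. Q \<subseteq> P \<longrightarrow> Q = P"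
    using finite_has_minimal[of S] S(2) by blast
  have "P \<subseteq> Q" if "Q \<in> S" for Q
    using hierarchy_nested[OF h, of P Q z] P S that by blast
  then show ?thesis using P(1) by blast
qed

definition lca_clade :: "'a set set \<Rightarrow> 'a set \<Rightarrow> 'a \<Rightarrow> 'a \<Rightarrow> bool" where
  "lca_clade G K x y \<longleftrightarrow> K \<in> G \<and> x \<in> K \<and> y \<in> K \<and> (\<forall>C\<in>G. x \<in> C \<longrightarrow> y \<in> C \<longrightarrow> \<not> C \<subset> K)"

lemma lca_clade_commute: "lca_clade G K x y \<longleftrightarrow> lca_clade G K y x"
  unfolding lca_clade_def by blast

lemma lca_clade_exists:
  assumes h: "hierarchy X G" and "x \<in> X" "y \<in> X"
  shows "\<exists>K. lca_clade G K x y"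
proof -
  obtain K where "K \<in> {C\<in>G. x \<in> C \<and> y \<in> C}" "\<forall>Q\<in>{C\<in>G. x \<in> C \<and> y \<in> C}. K \<subseteq> Q"
    using hierarchy_least_containing[OF h, of "{C\<in>G. x \<in> C \<and> y \<in> C}" x] hierarchy_top[OF h] assms
    by blast
  then have "lca_clade G K x y" unfolding lca_clade_def by blast
  then show ?thesis ..
qed

lemma lca_clade_least:
  assumes h: "hierarchy X G" and K: "lca_clade G K x y" and "C \<in> G" "x \<in> C" "y \<in> C"
  shows "K \<subseteq> C"
proof -
  have "K \<subseteq> C \<or> C \<subseteq> K" using hierarchy_nested[OF h, of K C x] K assms(3,4) unfolding lca_clade_def by blast
  then show ?thesis using K assms(3-5) unfolding lca_clade_def by blast
qed

lemma lca_clade_diag: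
  assumes h: "hierarchy X G" and K: "lca_clade G K x x"
  shows "K = {x}"
proof -
  have "{x} \<in> G" using hierarchy_singleton[OF h] hierarchy_subset[OF h] K unfolding lca_clade_def by blast
  then show ?thesis using K unfolding lca_clade_def by blast
qed

definition shared_length :: "'a set \<Rightarrow> 'a set set \<Rightarrow> ('a set \<Rightarrow> real) \<Rightarrow> 'a \<Rightarrow> 'a \<Rightarrow> real" where
  "shared_length X H l x y = (\<Sum>C\<in>{C\<in>H. C \<noteq> X \<and> x \<in> C \<and> y \<in> C}. l C)"

lemma tree_dist_eq_root_dist_shared_length:
  assumes "finite H"
  shows "tree_dist X H l x y = root_dist X H l x + root_dist X H l y - 2 * shared_length X H l x y"
proof -
  let ?Sx = "{C\<in>H. C \<noteq> X \<and> x \<in> C}"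
  let ?Sy = "{C\<in>H. C \<noteq> X \<and> y \<in> C}"
  let ?Sxy = "{C\<in>H. C \<noteq> X \<and> x \<in> C \<and> y \<in> C}"
  have fin: "finite ?Sx" "finite ?Sy" using assms by auto
  have "{C\<in>H. C \<noteq> X \<and> (x \<in> C) \<noteq> (y \<in> C)} = (?Sx - ?Sxy) \<union> (?Sy - ?Sxy)" by auto
  then have "tree_dist X H l x y = sum l ((?Sx - ?Sxy) \<union> (?Sy - ?Sxy))"
    unfolding tree_dist_def by simp
  also have "\<dots> = sum l (?Sx - ?Sxy) + sum l (?Sy - ?Sxy)"
    by (rule sum.union_disjoint) (use fin in auto)
  also have "\<dots> = (sum l ?Sx - sum l ?Sxy) + (sum l ?Sy - sum l ?Sxy)"
    using fin by (subst (1 2) sum_diff) auto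
  finally show ?thesis unfolding root_dist_def shared_length_def by simp
qed

(* Every clade containing x and y contains K, hence p and q, so the root paths of p and q share at
   least as much as those of x and y. *)
lemma tree_dist_le_of_lca_clade:
  assumes eq: "equidistant_tree X G l" and K: "lca_clade G K x y" and "p \<in> K" "q \<in> K"
  shows "tree_dist X G l p q \<le> tree_dist X G l x y"
proof -
  have h: "hierarchy X G" using eq by (rule equidistant_tree_hierarchy)
  have pts: "x \<in> X" "y \<in> X" "p \<in> X" "q \<in> X"
    using K assms(3,4) hierarchy_subset[OF h] unfolding lca_clade_def by blast+
  have "shared_length X G l x y \<le> shared_length X G l p q"
    unfolding shared_length_def
  proof (rule sum_mono2)
    show "{C\<in>G. C \<noteq> X \<and> x \<in> C \<and> y \<in> C} \<subseteq> {C\<in>G. C \<noteq> X \<and> p \<in> C \<and> q \<in> C}"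
      using lca_clade_least[OF h K] assms(3,4) by blast
  qed (use hierarchy_finite[OF h] eq in \<open>auto simp: equidistant_tree_def\<close>)
  moreover have "root_dist X G l p = root_dist X G l x" "root_dist X G l q = root_dist X G l x"
    "root_dist X G l y = root_dist X G l x"
    using eq pts unfolding equidistant_tree_def by metis+
  ultimately show ?thesis
    unfolding tree_dist_eq_root_dist_shared_length[OF hierarchy_finite[OF h]] by linarith
qed

lemma tree_dist_commute: "tree_dist X H l x y = tree_dist X H l y x"
  unfolding tree_dist_def by metis

lemma tree_dist_nonneg: "equidistant_tree X H l \<Longrightarrow> 0 \<le> tree_dist X H l x y"
  unfolding tree_dist_def equidistant_tree_def by (auto intro: sum_nonneg)

lemma tree_dist_ultrametric:
  assumes eq: "equidistant_tree X G l" and "p \<in> X" "q \<in> X" "r \<in> X"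
  shows "tree_dist X G l p q \<le> max (tree_dist X G l p r) (tree_dist X G l r q)"
proof -
  have h: "hierarchy X G" using eq by (rule equidistant_tree_hierarchy)
  obtain K where K: "lca_clade G K p r" using lca_clade_exists[OF h] assms by blast
  obtain L where L: "lca_clade G L r q" using lca_clade_exists[OF h] assms by blast
  have KL: "K \<in> G" "L \<in> G" "p \<in> K" "r \<in> K" "r \<in> L" "q \<in> L"
    using K L unfolding lca_clade_def by blast+
  from KL(1,2,4,5) have "K \<subseteq> L \<or> L \<subseteq> K" by (rule hierarchy_nested[OF h])
  then show ?thesis
  proof
    assume "K \<subseteq> L"
    then have "tree_dist X G l p q \<le> tree_dist X G l r q"
      using tree_dist_le_of_lca_clade[OF eq L] KL by blast
    then show ?thesis by simp
  next
    assume "L \<subseteq> K"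
    then have "tree_dist X G l p q \<le> tree_dist X G l p r"
      using tree_dist_le_of_lca_clade[OF eq K] KL by blast
    then show ?thesis by simp
  qed
qed

lemma tree_dist_between_clades:
  assumes eq: "equidistant_tree X G l" and AB: "A \<in> G" "B \<in> G" "A \<inter> B = {}"
    and "a \<in> A" "a' \<in> A" "b \<in> B" "b' \<in> B"
  shows "tree_dist X G l a b = tree_dist X G l a' b'"
proof -
  have h: "hierarchy X G" using eq by (rule equidistant_tree_hierarchy)
  have le: "tree_dist X G l a' b' \<le> tree_dist X G l a b"
    if pts: "a \<in> A" "a' \<in> A" "b \<in> B" "b' \<in> B" for a a' b b'
  proof -
    obtain K where K: "lca_clade G K a b"
      using lca_clade_exists[OF h] hierarchy_subset[OF h] AB pts by blast
    have "K \<subseteq> A \<or> A \<subseteq> K" "K \<subseteq> B \<or> B \<subseteq> K"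
      using hierarchy_nested[OF h, of K A a] hierarchy_nested[OF h, of K B b] K AB pts
      unfolding lca_clade_def by blast+
    then have "A \<subseteq> K" "B \<subseteq> K" using K AB(3) pts unfolding lca_clade_def by blast+
    then show ?thesis using tree_dist_le_of_lca_clade[OF eq K] pts by blast
  qed
  show ?thesis using le[of a a' b b'] le[of a' a b' b] assms by simp
qed

(* Every clade of G is a cluster of d; zero edge lengths are allowed, so G may refine the tree of d. *)
definition clade_compatible :: "'a set set \<Rightarrow> ('a \<Rightarrow> 'a \<Rightarrow> real) \<Rightarrow> bool" where
  "clade_compatible G d \<longleftrightarrow>
     (\<forall>K x y p q. lca_clade G K x y \<longrightarrow> p \<in> K \<longrightarrow> q \<in> K \<longrightarrow> d p q \<le> d x y)"

definition diameter :: "('a \<Rightarrow> 'a \<Rightarrow> real) \<Rightarrow> 'a set \<Rightarrow> real" where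
  "diameter d K = Max ((\<lambda>(p, q). d p q) ` (K \<times> K))"

lemma diameter_ge: "finite K \<Longrightarrow> p \<in> K \<Longrightarrow> q \<in> K \<Longrightarrow> d p q \<le> diameter d K"
  unfolding diameter_def by (rule Max_ge) auto

lemma diameter_le:
  "finite K \<Longrightarrow> K \<noteq> {} \<Longrightarrow> (\<And>p q. p \<in> K \<Longrightarrow> q \<in> K \<Longrightarrow> d p q \<le> c) \<Longrightarrow> diameter d K \<le> c"
  unfolding diameter_def by (subst Max_le_iff) auto

lemma diameter_singleton: "diameter d {x} = d x x"
  unfolding diameter_def by simp

lemma diameter_mono: "finite K' \<Longrightarrow> K \<noteq> {} \<Longrightarrow> K \<subseteq> K' \<Longrightarrow> diameter d K \<le> diameter d K'"
  unfolding diameter_def by (rule Max_mono) auto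

definition parent_clade :: "'a set set \<Rightarrow> 'a set \<Rightarrow> 'a set" where
  "parent_clade G K = (LEAST P. P \<in> G \<and> K \<subset> P)"

lemma parent_clade_eqI:
  assumes "P \<in> G" "K \<subset> P" "\<forall>Q\<in>G. K \<subset> Q \<longrightarrow> P \<subseteq> Q"
  shows "parent_clade G K = P"
  unfolding parent_clade_def by (rule Least_equality) (use assms in auto)

lemma parent_clade:
  assumes h: "hierarchy X G" and K: "K \<in> G" "K \<noteq> X"
  shows "parent_clade G K \<in> G" and "K \<subset> parent_clade G K"
proof -
  obtain z where "z \<in> K" using hierarchy_nonempty[OF h K(1)] by blast
  moreover have "X \<in> {Q\<in>G. K \<subset> Q}" using hierarchy_top[OF h] hierarchy_subset[OF h K(1)] K(2) by blast
  ultimately obtain P where P: "P \<in> {Q\<in>G. K \<subset> Q}" "\<forall>Q\<in>{Q\<in>G. K \<subset> Q}. P \<subseteq> Q"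
    using hierarchy_least_containing[OF h, of "{Q\<in>G. K \<subset> Q}" z] by blast
  then have "parent_clade G K = P" by (intro parent_clade_eqI) auto
  then show "parent_clade G K \<in> G" "K \<subset> parent_clade G K" using P(1) by auto
qed

lemma parent_clade_of_maximal:
  assumes h: "hierarchy X G" and "D \<in> G" "E \<in> G" "E \<subset> D" "x \<in> E"
    and maximal: "\<forall>C\<in>G. x \<in> C \<longrightarrow> C \<subset> D \<longrightarrow> C \<subseteq> E"
  shows "parent_clade G E = D"
proof (rule parent_clade_eqI)
  show "\<forall>Q\<in>G. E \<subset> Q \<longrightarrow> D \<subseteq> Q"
  proof (intro ballI impI)
    fix Q assume Q: "Q \<in> G" "E \<subset> Q"
    then have "Q \<subseteq> D \<or> D \<subseteq> Q" using hierarchy_nested[OF h Q(1) \<open>D \<in> G\<close>, of x] assms by blast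
    moreover have "\<not> Q \<subset> D" using maximal Q assms(5) by blast
    ultimately show "D \<subseteq> Q" by blast
  qed
qed (use assms in auto)

lemma sum_parent_clade_increments:
  fixes g :: "'a set \<Rightarrow> real"
  assumes h: "hierarchy X G"
  shows "D \<in> G \<Longrightarrow> x \<in> D \<Longrightarrow>
    (\<Sum>C\<in>{C\<in>G. x \<in> C \<and> C \<subset> D}. g (parent_clade G C) - g C) = g D - g {x}"
proof (induction D rule: measure_induct_rule[where f="\<lambda>D. card {C\<in>G. x \<in> C \<and> C \<subset> D}"])
  case (less D)
  define S where "S D = {C\<in>G. x \<in> C \<and> C \<subset> D}" for D
  have fin: "finite (S D)" for D unfolding S_def using hierarchy_finite[OF h] by auto
  have "{x} \<in> G" using hierarchy_singleton[OF h] hierarchy_subset[OF h] less.prems by blast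
  show ?case
  proof (cases "S D = {}")
    case True
    then have "D = {x}" using \<open>{x} \<in> G\<close> less.prems unfolding S_def by blast
    then have "{C\<in>G. x \<in> C \<and> C \<subset> D} = {}" by blast
    then have "(\<Sum>C\<in>{C\<in>G. x \<in> C \<and> C \<subset> D}. g (parent_clade G C) - g C) = 0"
      by (simp only: sum.empty)
    with \<open>D = {x}\<close> show ?thesis by simp
  next
    case False
    then obtain E where E: "E \<in> S D" "\<forall>C\<in>S D. E \<subseteq> C \<longrightarrow> E = C"
      using finite_has_maximal[OF fin] by blast
    have below_E: "C \<subseteq> E" if C: "C \<in> S D" for C
    proof -
      have "C \<subseteq> E \<or> E \<subseteq> C" using hierarchy_nested[OF h, of C E x] C E(1) unfolding S_def by blast
      then show ?thesis using C E(2) by blast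
    qed
    have "E \<notin> S E" unfolding S_def by blast
    have SD: "S D = insert E (S E)" using E(1) below_E unfolding S_def by auto
    have "parent_clade G E = D"
      using parent_clade_of_maximal[OF h less.prems(1)] E(1) below_E unfolding S_def by blast
    moreover have "(\<Sum>C\<in>S E. g (parent_clade G C) - g C) = g E - g {x}"
    proof -
      have "card (S E) < card (S D)" unfolding SD using fin \<open>E \<notin> S E\<close> by simp
      then show ?thesis using E(1) unfolding S_def by (intro less.IH) auto
    qed
    moreover have "(\<Sum>C\<in>S D. g (parent_clade G C) - g C) =
        (g (parent_clade G E) - g E) + (\<Sum>C\<in>S E. g (parent_clade G C) - g C)"
      unfolding SD using fin \<open>E \<notin> S E\<close> by simp
    ultimately show ?thesis unfolding S_def by simp
  qed
qed

lemma tree_dist_lca_clade_split: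
  assumes h: "hierarchy X G" and L: "lca_clade G L x y"
  shows "tree_dist X G l x y = sum l {C\<in>G. x \<in> C \<and> C \<subset> L} + sum l {C\<in>G. y \<in> C \<and> C \<subset> L}"
proof -
  have LX: "L \<subseteq> X" using L hierarchy_subset[OF h] unfolding lca_clade_def by blast
  have "{C\<in>G. C \<noteq> X \<and> (x \<in> C) \<noteq> (y \<in> C)} = {C\<in>G. x \<in> C \<and> C \<subset> L} \<union> {C\<in>G. y \<in> C \<and> C \<subset> L}"
  proof (intro set_eqI iffI)
    fix C assume C: "C \<in> {C\<in>G. C \<noteq> X \<and> (x \<in> C) \<noteq> (y \<in> C)}"
    then have "C \<subseteq> L \<or> L \<subseteq> C"
      using L hierarchy_nested[OF h, of C L] unfolding lca_clade_def by (cases "x \<in> C") blast+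
    then show "C \<in> {C\<in>G. x \<in> C \<and> C \<subset> L} \<union> {C\<in>G. y \<in> C \<and> C \<subset> L}"
      using C L unfolding lca_clade_def by blast
  qed (use L LX in \<open>auto simp: lca_clade_def\<close>)
  moreover have "{C\<in>G. x \<in> C \<and> C \<subset> L} \<inter> {C\<in>G. y \<in> C \<and> C \<subset> L} = {}"
    using L unfolding lca_clade_def by blast
  ultimately show ?thesis
    unfolding tree_dist_def using hierarchy_finite[OF h] by (simp add: sum.union_disjoint)
qed

lemma realizable_if_clade_compatible:
  assumes h: "hierarchy X G" and d0: "\<forall>x\<in>X. d x x = 0" and comp: "clade_compatible G d"
  shows "\<exists>l. equidistant_tree X G l \<and> (\<forall>x\<in>X. \<forall>y\<in>X. x \<noteq> y \<longrightarrow> tree_dist X G l x y = d x y)"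
proof -
  define g where "g K = diameter d K / 2" for K
  define l where "l C = g (parent_clade G C) - g C" for C
  have below: "(\<Sum>C\<in>{C\<in>G. x \<in> C \<and> C \<subset> D}. l C) = g D" if "D \<in> G" "x \<in> D" for D x
  proof -
    have "g {x} = 0" unfolding g_def diameter_singleton using d0 hierarchy_subset[OF h] that by auto
    then show ?thesis unfolding l_def using sum_parent_clade_increments[OF h that, of g] by simp
  qed
  have "0 \<le> l C" if "C \<in> G" "C \<noteq> X" for C
    using parent_clade[OF h that] diameter_mono[of "parent_clade G C" C d]
      hierarchy_finite_clade[OF h] hierarchy_nonempty[OF h that(1)]
    unfolding l_def g_def by auto
  moreover have "root_dist X G l x = g X" if "x \<in> X" for x
  proof -
    have "{C\<in>G. C \<noteq> X \<and> x \<in> C} = {C\<in>G. x \<in> C \<and> C \<subset> X}" using hierarchy_subset[OF h] by blast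
    then show ?thesis unfolding root_dist_def using below[OF hierarchy_top[OF h] that] by simp
  qed
  ultimately have "equidistant_tree X G l" unfolding equidistant_tree_def using h by auto
  moreover have "tree_dist X G l x y = d x y" if xy: "x \<in> X" "y \<in> X" for x y
  proof -
    obtain L where L: "lca_clade G L x y" using lca_clade_exists[OF h xy] by blast
    have fin: "finite L" and "L \<noteq> {}" "x \<in> L" "y \<in> L"
      using L hierarchy_finite_clade[OF h] unfolding lca_clade_def by auto
    have "tree_dist X G l x y = 2 * g L"
      using tree_dist_lca_clade_split[OF h L] below L unfolding lca_clade_def by simp
    also have "\<dots> = d x y"
    proof -
      have "diameter d L \<le> d x y"
        using diameter_le[OF fin \<open>L \<noteq> {}\<close>] comp L unfolding clade_compatible_def by blast
      moreover have "d x y \<le> diameter d L" using diameter_ge[OF fin \<open>x \<in> L\<close> \<open>y \<in> L\<close>] .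
      ultimately show ?thesis unfolding g_def by simp
    qed
    finally show ?thesis .
  qed
  ultimately show ?thesis by blast
qed

(* The NNI of the paper in normal form: the clade A \<union> C of G1 becomes A \<union> B in G2. Both
   alternatives of nni are instances, with (A, B, C) = (X1, X2, X3) or (X3, X2, X1). *)
definition nni_at :: "'a set set \<Rightarrow> 'a set set \<Rightarrow> 'a set \<Rightarrow> 'a set \<Rightarrow> 'a set \<Rightarrow> bool" where
  "nni_at G1 G2 A B C \<longleftrightarrow>
     A \<noteq> {} \<and> B \<noteq> {} \<and> C \<noteq> {} \<and> A \<inter> B = {} \<and> A \<inter> C = {} \<and> B \<inter> C = {} \<and>
     {A, B, C, A \<union> B \<union> C} \<subseteq> G1 \<inter> G2 \<and> A \<union> C \<in> G1 \<and> A \<union> B \<in> G2 \<and>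
     G1 - {A \<union> C} \<subseteq> G2 \<and> G2 - {A \<union> B} \<subseteq> G1 \<and>
     (\<forall>K\<in>G1. K \<subset> A \<union> B \<union> C \<longrightarrow> K = A \<union> C \<or> K \<subseteq> A \<or> K \<subseteq> B \<or> K \<subseteq> C) \<and>
     (\<forall>K\<in>G2. K \<subset> A \<union> B \<union> C \<longrightarrow> K = A \<union> B \<or> K \<subseteq> A \<or> K \<subseteq> B \<or> K \<subseteq> C)"

lemma clades_except_cherry:
  assumes parts: "\<forall>i\<in>{A, B, C}. {K\<in>G1. K \<subseteq> i} = {K\<in>G2. K \<subseteq> i}"
    and outside: "{K\<in>G1. \<not> K \<subseteq> A \<union> B \<union> C} = {K\<in>G2. \<not> K \<subseteq> A \<union> B \<union> C}"
    and inside: "{K\<in>G1. K \<subseteq> A \<union> B \<union> C} = {A \<union> B \<union> C, D} \<union> {K\<in>G1. K \<subseteq> A \<or> K \<subseteq> B \<or> K \<subseteq> C}"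
    and "A \<union> B \<union> C \<in> G2"
  shows "G1 - {D} \<subseteq> G2"
proof
  fix K assume K: "K \<in> G1 - {D}"
  show "K \<in> G2"
  proof (cases "K \<subseteq> A \<union> B \<union> C")
    case True
    then have "K = A \<union> B \<union> C \<or> K \<subseteq> A \<or> K \<subseteq> B \<or> K \<subseteq> C" using K inside by blast
    then show ?thesis using K parts assms(4) by blast
  next
    case False
    then show ?thesis using K outside by blast
  qed
qed

lemma nni_atI:
  assumes ne: "A \<noteq> {}" "B \<noteq> {}" "C \<noteq> {}" and dj: "A \<inter> B = {}" "A \<inter> C = {}" "B \<inter> C = {}"
    and cl: "{A, B, C, A \<union> B \<union> C} \<subseteq> G1 \<inter> G2"
    and parts: "\<forall>i\<in>{A, B, C}. {K\<in>G1. K \<subseteq> i} = {K\<in>G2. K \<subseteq> i}"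
    and outside: "{K\<in>G1. \<not> K \<subseteq> A \<union> B \<union> C} = {K\<in>G2. \<not> K \<subseteq> A \<union> B \<union> C}"
    and inside1: "{K\<in>G1. K \<subseteq> A \<union> B \<union> C} = {A \<union> B \<union> C, A \<union> C} \<union> {K\<in>G1. K \<subseteq> A \<or> K \<subseteq> B \<or> K \<subseteq> C}"
    and inside2: "{K\<in>G2. K \<subseteq> A \<union> B \<union> C} = {A \<union> B \<union> C, A \<union> B} \<union> {K\<in>G2. K \<subseteq> A \<or> K \<subseteq> B \<or> K \<subseteq> C}"
  shows "nni_at G1 G2 A B C"
proof -
  have "A \<union> C \<in> G1" using inside1 by blast
  moreover have "A \<union> B \<in> G2" using inside2 by blast
  moreover have "G1 - {A \<union> C} \<subseteq> G2"
    using clades_except_cherry[OF parts outside inside1] cl by blast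
  moreover have "G2 - {A \<union> B} \<subseteq> G1"
    using clades_except_cherry[OF _ outside[symmetric] inside2] parts cl by auto
  moreover have "\<forall>K\<in>G1. K \<subset> A \<union> B \<union> C \<longrightarrow> K = A \<union> C \<or> K \<subseteq> A \<or> K \<subseteq> B \<or> K \<subseteq> C"
    using inside1 by blast
  moreover have "\<forall>K\<in>G2. K \<subset> A \<union> B \<union> C \<longrightarrow> K = A \<union> B \<or> K \<subseteq> A \<or> K \<subseteq> B \<or> K \<subseteq> C"
    using inside2 by blast
  ultimately show ?thesis using ne dj cl unfolding nni_at_def by blast
qed

lemma nni_at_of_nni:
  assumes "nni X H1 H2"
  shows "\<exists>A B C. nni_at H1 H2 A B C"
proof -
  obtain X1 X2 X3 where ne: "X1 \<noteq> {}" "X2 \<noteq> {}" "X3 \<noteq> {}"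
    and dj: "X1 \<inter> X2 = {}" "X1 \<inter> X3 = {}" "X2 \<inter> X3 = {}"
    and cl: "{X1, X2, X3, X1 \<union> X2 \<union> X3} \<subseteq> H1 \<inter> H2"
    and parts: "\<forall>i\<in>{X1, X2, X3}. {C\<in>H1. C \<subseteq> i} = {C\<in>H2. C \<subseteq> i}"
    and outside: "{C\<in>H1. \<not> C \<subseteq> X1 \<union> X2 \<union> X3} = {C\<in>H2. \<not> C \<subseteq> X1 \<union> X2 \<union> X3}"
    and inside1: "{C\<in>H1. C \<subseteq> X1 \<union> X2 \<union> X3} =
      {X1 \<union> X2 \<union> X3, X1 \<union> X3} \<union> {C\<in>H1. C \<subseteq> X1 \<or> C \<subseteq> X2 \<or> C \<subseteq> X3}"
    and inside2: "{C\<in>H2. C \<subseteq> X1 \<union> X2 \<union> X3} =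
        {X1 \<union> X2 \<union> X3, X1 \<union> X2} \<union> {C\<in>H2. C \<subseteq> X1 \<or> C \<subseteq> X2 \<or> C \<subseteq> X3} \<or>
      {C\<in>H2. C \<subseteq> X1 \<union> X2 \<union> X3} =
        {X1 \<union> X2 \<union> X3, X2 \<union> X3} \<union> {C\<in>H2. C \<subseteq> X1 \<or> C \<subseteq> X2 \<or> C \<subseteq> X3}"
    using assms unfolding nni_def Let_def by (elim exE conjE) (simp only: insert_subset Int_iff empty_subsetI)
  from inside2 show ?thesis
  proof
    assume "{C\<in>H2. C \<subseteq> X1 \<union> X2 \<union> X3} =
      {X1 \<union> X2 \<union> X3, X1 \<union> X2} \<union> {C\<in>H2. C \<subseteq> X1 \<or> C \<subseteq> X2 \<or> C \<subseteq> X3}"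
    then have "nni_at H1 H2 X1 X2 X3" using nni_atI[OF ne dj cl parts outside inside1] by blast
    then show ?thesis by blast
  next
    assume "{C\<in>H2. C \<subseteq> X1 \<union> X2 \<union> X3} =
      {X1 \<union> X2 \<union> X3, X2 \<union> X3} \<union> {C\<in>H2. C \<subseteq> X1 \<or> C \<subseteq> X2 \<or> C \<subseteq> X3}"
    then have "nni_at H1 H2 X3 X2 X1"
      using ne dj cl parts outside inside1
      by (intro nni_atI) (simp_all add: Un_ac Int_ac insert_commute disj_commute disj_left_commute)
    then show ?thesis by blast
  qed
qed

lemma nni_at_swap: "nni_at G1 G2 A B C \<Longrightarrow> nni_at G2 G1 A C B"
  unfolding nni_at_def by (simp add: Un_ac Int_commute) blast

lemma nni_at_lca_clade_root1:
  assumes nni: "nni_at G1 G2 A B C" and xy: "x \<in> B" "y \<in> A \<union> C"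
  shows "lca_clade G1 (A \<union> B \<union> C) x y"
proof -
  have "\<not> K \<subset> A \<union> B \<union> C" if "K \<in> G1" "x \<in> K" "y \<in> K" for K
  proof
    assume "K \<subset> A \<union> B \<union> C"
    then have "K = A \<union> C \<or> K \<subseteq> A \<or> K \<subseteq> B \<or> K \<subseteq> C"
      using nni \<open>K \<in> G1\<close> unfolding nni_at_def by blast
    moreover have "A \<inter> B = {}" "B \<inter> C = {}" using nni unfolding nni_at_def by auto
    ultimately show False using that xy by (elim disjE) blast+
  qed
  moreover have "A \<union> B \<union> C \<in> G1" using nni unfolding nni_at_def by auto
  ultimately show ?thesis unfolding lca_clade_def using xy by blast
qed

lemma nni_at_lca_clade_root2:
  "nni_at G1 G2 A B C \<Longrightarrow> x \<in> C \<Longrightarrow> y \<in> A \<union> B \<Longrightarrow> lca_clade G2 (A \<union> B \<union> C) x y"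
  using nni_at_lca_clade_root1[OF nni_at_swap] by (simp add: Un_ac)

lemma nni_at_lca_clade_unchanged:
  assumes nni: "nni_at G1 G2 A B C" and h1: "hierarchy X G1" and K: "lca_clade G1 K x y"
    and other: "K \<noteq> A \<union> B \<union> C" "K \<noteq> A \<union> C"
  shows "lca_clade G2 K x y"
proof -
  define Y where "Y = A \<union> B \<union> C"
  have ne: "A \<noteq> {}" "B \<noteq> {}" and dj: "A \<inter> B = {}" "A \<inter> C = {}" "B \<inter> C = {}"
    and "Y \<in> G1" and G1G2: "G1 - {A \<union> C} \<subseteq> G2" and G2G1: "G2 - {A \<union> B} \<subseteq> G1"
    and inside1: "\<forall>K\<in>G1. K \<subset> Y \<longrightarrow> K = A \<union> C \<or> K \<subseteq> A \<or> K \<subseteq> B \<or> K \<subseteq> C"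
    using nni unfolding nni_at_def Y_def by auto
  have KG1: "K \<in> G1" and xy: "x \<in> K" "y \<in> K"
    and K_min: "\<And>C'. C' \<in> G1 \<Longrightarrow> x \<in> C' \<Longrightarrow> y \<in> C' \<Longrightarrow> \<not> C' \<subset> K"
    using K unfolding lca_clade_def by auto
  have "\<not> C' \<subset> K" if C': "C' \<in> G2" "x \<in> C'" "y \<in> C'" for C'
  proof
    assume "C' \<subset> K"
    with K_min C' G2G1 have "C' = A \<union> B" by blast
    with \<open>C' \<subset> K\<close> have AB_K: "A \<union> B \<subset> K" by simp
    obtain a where "a \<in> A" using ne by blast
    then have "K \<subseteq> Y \<or> Y \<subseteq> K"
      using hierarchy_nested[OF h1 KG1 \<open>Y \<in> G1\<close>] AB_K unfolding Y_def by blast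
    moreover have "\<not> K \<subseteq> Y"
    proof
      assume "K \<subseteq> Y"
      with other have "K \<subset> Y" unfolding Y_def by auto
      with inside1 KG1 other have "K \<subseteq> A \<or> K \<subseteq> B \<or> K \<subseteq> C" by blast
      with AB_K ne dj show False by auto
    qed
    ultimately have "Y \<subset> K" using other unfolding Y_def by blast
    moreover have "x \<in> Y" "y \<in> Y" using C' \<open>C' = A \<union> B\<close> unfolding Y_def by auto
    ultimately show False using K_min[OF \<open>Y \<in> G1\<close>] by blast
  qed
  moreover have "K \<in> G2" using KG1 other G1G2 by blast
  ultimately show ?thesis using xy unfolding lca_clade_def by blast
qed

lemma nni_at_lca_clade:
  assumes nni: "nni_at G1 G2 A B C" and h1: "hierarchy X G1" and K: "lca_clade G1 K x y"
    and not_AB: "\<not> (x \<in> A \<and> y \<in> B)" "\<not> (x \<in> B \<and> y \<in> A)"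
  shows "\<exists>K'. lca_clade G2 K' x y \<and> K \<subseteq> K'"
proof -
  define Y where "Y = A \<union> B \<union> C"
  have ne: "A \<noteq> {}" "B \<noteq> {}" "C \<noteq> {}" and dj: "A \<inter> B = {}" "A \<inter> C = {}" "B \<inter> C = {}"
    and cl1: "A \<in> G1" "B \<in> G1" "C \<in> G1" "A \<union> C \<in> G1"
    using nni unfolding nni_at_def by auto
  have xy: "x \<in> K" "y \<in> K"
    and K_min: "\<And>C'. C' \<in> G1 \<Longrightarrow> x \<in> C' \<Longrightarrow> y \<in> C' \<Longrightarrow> \<not> C' \<subset> K"
    using K unfolding lca_clade_def by auto
  have root: "lca_clade G2 Y x y" if "x \<in> C \<and> y \<in> A \<union> B \<or> y \<in> C \<and> x \<in> A \<union> B"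
    using that nni_at_lca_clade_root2[OF nni] lca_clade_commute unfolding Y_def by metis
  consider "K = Y" | "K = A \<union> C" | "K \<noteq> Y" "K \<noteq> A \<union> C" by blast
  then show ?thesis
  proof cases
    case 1
    have "B \<subset> Y" "A \<union> C \<subset> Y" using ne dj unfolding Y_def by auto
    then have "\<not> (x \<in> B \<and> y \<in> B)" "\<not> (x \<in> A \<union> C \<and> y \<in> A \<union> C)"
      using K_min[OF cl1(2)] K_min[OF cl1(4)] unfolding 1 by auto
    then show ?thesis using root xy not_AB unfolding 1 Y_def by blast
  next
    case 2
    have "A \<subset> A \<union> C" "C \<subset> A \<union> C" using ne dj by auto
    then have "\<not> (x \<in> A \<and> y \<in> A)" "\<not> (x \<in> C \<and> y \<in> C)"
      using K_min[OF cl1(1)] K_min[OF cl1(3)] unfolding 2 by auto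
    moreover have "K \<subseteq> Y" unfolding 2 Y_def by auto
    ultimately show ?thesis using root xy unfolding 2 by blast
  next
    case 3
    then show ?thesis using nni_at_lca_clade_unchanged[OF nni h1 K] unfolding Y_def by blast
  qed
qed

lemma segment_dist_mono:
  assumes eH: "equidistant_tree X H l"
    and seg: "\<forall>x\<in>X. \<forall>y\<in>X. x \<noteq> y \<longrightarrow>
      tree_dist X H l x y = max (a + tree_dist X G1 l1 x y) (b + tree_dist X G2 l2 x y)"
    and pts: "x \<in> X" "y \<in> X" "p \<in> X" "q \<in> X" and diag: "x = y \<Longrightarrow> p = q"
    and le: "tree_dist X G1 l1 p q \<le> tree_dist X G1 l1 x y" "tree_dist X G2 l2 p q \<le> tree_dist X G2 l2 x y"
  shows "tree_dist X H l p q \<le> tree_dist X H l x y"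
proof (cases "p = q")
  case True
  then show ?thesis using tree_dist_nonneg[OF eH] by (simp add: tree_dist_def)
next
  case False
  then have "x \<noteq> y" using diag by blast
  with False pts seg
  have "tree_dist X H l p q = max (a + tree_dist X G1 l1 p q) (b + tree_dist X G2 l2 p q)"
    and "tree_dist X H l x y = max (a + tree_dist X G1 l1 x y) (b + tree_dist X G2 l2 x y)"
    by auto
  then show ?thesis by (simp only:) (intro max.mono add_left_mono le)
qed

lemma nni_segment_dist_le_BC:
  assumes nni: "nni_at G1 G2 A B C"
    and e1: "equidistant_tree X G1 l1" and e2: "equidistant_tree X G2 l2"
    and eH: "equidistant_tree X H l"
    and seg: "\<forall>x\<in>X. \<forall>y\<in>X. x \<noteq> y \<longrightarrow>
      tree_dist X H l x y = max (a + tree_dist X G1 l1 x y) (b + tree_dist X G2 l2 x y)"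
    and yz: "y \<in> B" "z \<in> C" and pq: "p \<in> A \<union> B \<union> C" "q \<in> A \<union> B \<union> C"
  shows "tree_dist X H l p q \<le> tree_dist X H l y z"
proof (rule segment_dist_mono[OF eH seg])
  have "z \<in> A \<union> C" "y \<in> A \<union> B" using yz by auto
  then show "tree_dist X G1 l1 p q \<le> tree_dist X G1 l1 y z"
    and "tree_dist X G2 l2 p q \<le> tree_dist X G2 l2 y z"
    using tree_dist_le_of_lca_clade[OF e1 nni_at_lca_clade_root1[OF nni yz(1)]]
      tree_dist_le_of_lca_clade[OF e2 nni_at_lca_clade_root2[OF nni yz(2)]] pq tree_dist_commute
    by metis+
  have "A \<union> B \<union> C \<in> G1" and "B \<inter> C = {}" using nni unfolding nni_at_def by auto
  then show "y \<in> X" "z \<in> X" "p \<in> X" "q \<in> X" "y = z \<Longrightarrow> p = q"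
    using hierarchy_subset[OF equidistant_tree_hierarchy[OF e1]] yz pq by blast+
qed

lemma nni_segment_clade_compatible:
  assumes nni: "nni_at G1 G2 A B C"
    and e1: "equidistant_tree X G1 l1" and e2: "equidistant_tree X G2 l2"
    and eH: "equidistant_tree X H l"
    and seg: "\<forall>x\<in>X. \<forall>y\<in>X. x \<noteq> y \<longrightarrow>
      tree_dist X H l x y = max (a + tree_dist X G1 l1 x y) (b + tree_dist X G2 l2 x y)"
    and closer: "\<forall>x\<in>A. \<forall>y\<in>B. \<forall>z\<in>C. tree_dist X H l x z \<le> tree_dist X H l x y"
  shows "clade_compatible G1 (tree_dist X H l)"
proof -
  let ?d = "tree_dist X H l"
  define Y where "Y = A \<union> B \<union> C"
  have h1: "hierarchy X G1" using e1 by (rule equidistant_tree_hierarchy)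
  have "Y \<in> G1" and "C \<noteq> {}" using nni unfolding nni_at_def Y_def by auto
  then have YX: "Y \<subseteq> X" using hierarchy_subset[OF h1] by blast
  \<comment> \<open>Pairs split between A and B are where the clade A \<union> B of G2 does not help; there the
    ultrametric inequality through a point of C and the hypothesis closer take over.\<close>
  have AB: "?d p q \<le> ?d x y" if "x \<in> A" "y \<in> B" "p \<in> Y" "q \<in> Y" for x y p q
  proof -
    obtain z where "z \<in> C" using \<open>C \<noteq> {}\<close> by blast
    have "x \<in> X" "y \<in> X" "z \<in> X" using that \<open>z \<in> C\<close> YX unfolding Y_def by auto
    have "?d p q \<le> ?d y z"
      using nni_segment_dist_le_BC[OF nni e1 e2 eH seg] that \<open>z \<in> C\<close> unfolding Y_def by blast
    also have "\<dots> \<le> max (?d y x) (?d x z)"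
      by (rule tree_dist_ultrametric[OF eH \<open>y \<in> X\<close> \<open>z \<in> X\<close> \<open>x \<in> X\<close>])
    also have "\<dots> = max (?d x y) (?d x z)" by (simp only: tree_dist_commute[of X H l y x])
    also have "\<dots> = ?d x y" using closer that \<open>z \<in> C\<close> by (simp add: max_absorb1)
    finally show ?thesis .
  qed
  show ?thesis unfolding clade_compatible_def
  proof (intro allI impI)
    fix K x y p q assume K: "lca_clade G1 K x y" and pq: "p \<in> K" "q \<in> K"
    show "?d p q \<le> ?d x y"
    proof (cases "x \<in> A \<and> y \<in> B \<or> x \<in> B \<and> y \<in> A")
      case True
      then have "x \<in> Y" "y \<in> Y" unfolding Y_def by auto
      then have "K \<subseteq> Y" by (rule lca_clade_least[OF h1 K \<open>Y \<in> G1\<close>])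
      then show ?thesis using True AB[of x y p q] AB[of y x p q] pq tree_dist_commute[of X H l y x] by auto
    next
      case False
      then obtain K' where K': "lca_clade G2 K' x y" "K \<subseteq> K'"
        using nni_at_lca_clade[OF nni h1 K] by blast
      show ?thesis
      proof (rule segment_dist_mono[OF eH seg])
        show "tree_dist X G1 l1 p q \<le> tree_dist X G1 l1 x y"
          using tree_dist_le_of_lca_clade[OF e1 K] pq .
        show "tree_dist X G2 l2 p q \<le> tree_dist X G2 l2 x y"
          using tree_dist_le_of_lca_clade[OF e2 K'(1)] K'(2) pq by blast
        show "x = y \<Longrightarrow> p = q" using lca_clade_diag[OF h1] K pq by blast
        show "x \<in> X" "y \<in> X" "p \<in> X" "q \<in> X"
          using K pq hierarchy_subset[OF h1] unfolding lca_clade_def by blast+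
      qed
    qed
  qed
qed

lemma same_ultrametric_if_clade_compatible:
  assumes "hierarchy X G" and "clade_compatible G (tree_dist X H l)"
  shows "\<exists>l'. equidistant_tree X G l' \<and> same_ultrametric X H l G l'"
proof -
  have "\<forall>x\<in>X. tree_dist X H l x x = 0" by (simp add: tree_dist_def)
  then obtain l' where "equidistant_tree X G l'"
    and "\<forall>x\<in>X. \<forall>y\<in>X. x \<noteq> y \<longrightarrow> tree_dist X G l' x y = tree_dist X H l x y"
    using realizable_if_clade_compatible[OF assms(1) _ assms(2)] by blast
  then show ?thesis unfolding same_ultrametric_def by auto
qed

lemma segment_dist_between_common_clades:
  assumes e1: "equidistant_tree X G1 l1" and e2: "equidistant_tree X G2 l2"
    and seg: "\<forall>x\<in>X. \<forall>y\<in>X. x \<noteq> y \<longrightarrow>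
      tree_dist X H l x y = max (a + tree_dist X G1 l1 x y) (b + tree_dist X G2 l2 x y)"
    and PQ: "P \<in> G1 \<inter> G2" "Q \<in> G1 \<inter> G2" "P \<inter> Q = {}"
    and pts: "x \<in> P" "x' \<in> P" "y \<in> Q" "y' \<in> Q"
  shows "tree_dist X H l x y = tree_dist X H l x' y'"
proof -
  have "P \<subseteq> X" "Q \<subseteq> X" using PQ hierarchy_subset[OF equidistant_tree_hierarchy[OF e1]] by auto
  moreover have "x \<noteq> y" "x' \<noteq> y'" using PQ(3) pts by auto
  ultimately have "tree_dist X H l x y = max (a + tree_dist X G1 l1 x y) (b + tree_dist X G2 l2 x y)"
    and "tree_dist X H l x' y' = max (a + tree_dist X G1 l1 x' y') (b + tree_dist X G2 l2 x' y')"
    using seg pts by auto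
  moreover have "tree_dist X G1 l1 x y = tree_dist X G1 l1 x' y'"
    using tree_dist_between_clades[OF e1 _ _ PQ(3) pts] PQ by blast
  moreover have "tree_dist X G2 l2 x y = tree_dist X G2 l2 x' y'"
    using tree_dist_between_clades[OF e2 _ _ PQ(3) pts] PQ by blast
  ultimately show ?thesis by simp
qed

lemma nni_segment_realized:
  assumes nni: "nni_at G1 G2 A B C"
    and e1: "equidistant_tree X G1 l1" and e2: "equidistant_tree X G2 l2"
    and eH: "equidistant_tree X H l"
    and seg: "\<forall>x\<in>X. \<forall>y\<in>X. x \<noteq> y \<longrightarrow>
      tree_dist X H l x y = max (a + tree_dist X G1 l1 x y) (b + tree_dist X G2 l2 x y)"
  shows "(\<exists>l'. equidistant_tree X G1 l' \<and> same_ultrametric X H l G1 l') \<or>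
         (\<exists>l'. equidistant_tree X G2 l' \<and> same_ultrametric X H l G2 l')"
proof -
  let ?d = "tree_dist X H l"
  have ABC: "A \<in> G1 \<inter> G2" "B \<in> G1 \<inter> G2" "C \<in> G1 \<inter> G2" "A \<inter> B = {}" "A \<inter> C = {}"
    and "A \<noteq> {}" "B \<noteq> {}" "C \<noteq> {}"
    using nni unfolding nni_at_def by auto
  then obtain a0 b0 c0 where abc: "a0 \<in> A" "b0 \<in> B" "c0 \<in> C" by blast
  have AB: "?d x y = ?d a0 b0" and AC: "?d x z = ?d a0 c0" if "x \<in> A" "y \<in> B" "z \<in> C" for x y z
    using segment_dist_between_common_clades[OF e1 e2 seg] ABC that abc by blast+
  show ?thesis
  proof (cases "?d a0 c0 \<le> ?d a0 b0")
    case True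
    then have "\<forall>x\<in>A. \<forall>y\<in>B. \<forall>z\<in>C. ?d x z \<le> ?d x y" using AB AC by simp
    then have "clade_compatible G1 ?d"
      by (rule nni_segment_clade_compatible[OF nni e1 e2 eH seg])
    then show ?thesis
      using same_ultrametric_if_clade_compatible equidistant_tree_hierarchy[OF e1] by blast
  next
    case False
    then have "\<forall>x\<in>A. \<forall>y\<in>C. \<forall>z\<in>B. ?d x z \<le> ?d x y" using AB AC by simp
    moreover have "\<forall>x\<in>X. \<forall>y\<in>X. x \<noteq> y \<longrightarrow>
        ?d x y = max (b + tree_dist X G2 l2 x y) (a + tree_dist X G1 l1 x y)"
      using seg by (simp add: max.commute)
    ultimately have "clade_compatible G2 ?d"
      using nni_segment_clade_compatible[OF nni_at_swap[OF nni] e2 e1 eH] by blast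
    then show ?thesis
      using same_ultrametric_if_clade_compatible equidistant_tree_hierarchy[OF e2] by blast
  qed
qed

theorem theorem6:
  fixes X :: "'a set" and H1 H2 :: "'a set set" and l1 l2 :: "'a set \<Rightarrow> real"
  assumes "equidistant_tree X H1 l1"
    and "equidistant_tree X H2 l2"
    and "nni X H1 H2"
  shows "\<forall>H l. on_tropical_segment X H1 l1 H2 l2 H l \<longrightarrow>
           (\<exists>l'. equidistant_tree X H1 l' \<and> same_ultrametric X H l H1 l') \<or>
           (\<exists>l'. equidistant_tree X H2 l' \<and> same_ultrametric X H l H2 l')"
proof (intro allI impI)
  fix H l assume "on_tropical_segment X H1 l1 H2 l2 H l"
  then obtain a b where "equidistant_tree X H l" and "\<forall>x\<in>X. \<forall>y\<in>X. x \<noteq> y \<longrightarrow>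
      tree_dist X H l x y = max (a + tree_dist X H1 l1 x y) (b + tree_dist X H2 l2 x y)"
    unfolding on_tropical_segment_def by blast
  moreover obtain A B C where "nni_at H1 H2 A B C" using nni_at_of_nni[OF assms(3)] by blast
  ultimately show "(\<exists>l'. equidistant_tree X H1 l' \<and> same_ultrametric X H l H1 l') \<or>
      (\<exists>l'. equidistant_tree X H2 l' \<and> same_ultrametric X H l H2 l')"
    using nni_segment_realized assms(1,2) by blast
qed

end
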